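(* Let $0<b<c$ and $x_1,x_2,\dots\in\mathbb{R}^d$. Define $D_0=\frac{bc}{c-b}I$ and $D_t=\big(D_{t-1}^{-1}+c^{-1}I\big)^{-1}+x_tx_t^\top$ for $t\ge1$, and $D'_{t-1}=\big(I+c^{-1}D_{t-1}\big)^{-1}$. Then for all $t\ge1$, \[ D'_{t-1}D_t^{-1}x_tx_t^\top D_t^{-1}D'_{t-1}-D_{t-1}^{-1}+D'_{t-1}\big(D_t^{-1}D'_{t-1}+c^{-1}I\big)\preceq 0, \] where $A\preceq 0$ means $A$ is negative semidefinite. *)

theory Defs
  imports "HOL-Analysis.Analysis"
begin

definition outer :: "real^'n \<Rightarrow> real^'n^'n" where
  "outer x = (\<chi> i j. x $ i * x $ j)"

definition neg_semidef :: "real^'n^'n \<Rightarrow> bool" where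
  "neg_semidef A \<longleftrightarrow> (\<forall>v. v \<bullet> (A *v v) \<le> 0)"

primrec Dmat :: "real \<Rightarrow> real \<Rightarrow> (nat \<Rightarrow> real^'n) \<Rightarrow> nat \<Rightarrow> real^'n^'n" where
  "Dmat b c x 0 = mat (b * c / (c - b))"
| "Dmat b c x (Suc t) =
     matrix_inv (matrix_inv (Dmat b c x t) + mat (1 / c)) + outer (x (Suc t))"

definition Dprime :: "real \<Rightarrow> real \<Rightarrow> (nat \<Rightarrow> real^'n) \<Rightarrow> nat \<Rightarrow> real^'n^'n" where
  "Dprime b c x t = matrix_inv (mat 1 + (1 / c) *\<^sub>R Dmat b c x t)"

end

theory Submission imports Defs begin

text \<open>
  All \<open>D\<^sub>t\<close> are symmetric positive definite. Fix \<open>t\<close>, abbreviate \<open>D = D\<^sub>t\<^sub>-\<^sub>1\<close> and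
  \<open>S = D\<^sup>-\<^sup>1 + I/c\<close>, so \<open>D\<^sub>t = S\<^sup>-\<^sup>1 + x x\<^sup>T\<close>. For a test vector \<open>v\<close> put \<open>w = D'\<^sub>t\<^sub>-\<^sub>1 v\<close>,
  i.e. \<open>v = w + D w / c\<close>, and \<open>y = D\<^sub>t\<^sup>-\<^sup>1 w\<close>, i.e. \<open>w = S\<^sup>-\<^sup>1 y + (x\<^sup>T y) x\<close>. In the quadratic
  form at \<open>v\<close>, the terms \<open>v\<^sup>T w / c - v\<^sup>T D\<^sup>-\<^sup>1 v\<close> collapse to \<open>-w\<^sup>T S w\<close>, and expanding
  \<open>w\<^sup>T S w\<close> through the rank-one update leaves exactly \<open>-(x\<^sup>T y)\<^sup>2 x\<^sup>T S x \<le> 0\<close>.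
\<close>

lemma mat_matrix_vector_mult: "mat k *v (v::real^'n) = k *\<^sub>R v"
  by (simp add: vec_eq_iff matrix_vector_mult_def mat_def if_distrib if_distribR cong del: if_weak_cong)

lemma outer_matrix_vector_mult: "outer x *v v = (x \<bullet> v) *\<^sub>R x"
  by (simp add: vec_eq_iff matrix_vector_mult_def outer_def inner_vec_def
      sum_distrib_left sum_distrib_right mult_ac)

lemma transpose_outer: "transpose (outer x) = outer x"
  by (simp add: outer_def transpose_def vec_eq_iff mult.commute)

lemma transpose_add: "transpose (A + B) = transpose A + transpose (B::'a::semiring_1^'n^'m)"
  by (simp add: transpose_def vec_eq_iff)

lemma inner_symmetric_matrix:
  "transpose A = A \<Longrightarrow> u \<bullet> (A *v v) = (A *v u) \<bullet> (v::real^'n)"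
  by (metis dot_lmul_matrix vector_transpose_matrix)

lemma matrix_inv_right: "invertible A \<Longrightarrow> A ** matrix_inv A = mat 1"
  and matrix_inv_left: "invertible A \<Longrightarrow> matrix_inv A ** A = mat 1"
  using someI_ex[of "\<lambda>A'. A ** A' = mat 1 \<and> A' ** A = mat 1"]
  unfolding invertible_def matrix_inv_def by auto

lemma transpose_matrix_inv_symmetric:
  fixes A :: "real^'n^'n"
  assumes "invertible A" "transpose A = A"
  shows "transpose (matrix_inv A) = matrix_inv A"
proof -
  have left: "transpose (matrix_inv A) ** A = mat 1"
    using matrix_inv_right[OF assms(1)] assms(2) by (metis matrix_transpose_mul transpose_mat)
  have "transpose (matrix_inv A) = transpose (matrix_inv A) ** (A ** matrix_inv A)"
    using matrix_inv_right[OF assms(1)] by simp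
  also have "\<dots> = matrix_inv A"
    by (simp add: matrix_mul_assoc left)
  finally show ?thesis .
qed

definition pos_def :: "real^'n^'n \<Rightarrow> bool" where
  "pos_def A \<longleftrightarrow> transpose A = A \<and> (\<forall>v. v \<noteq> 0 \<longrightarrow> 0 < v \<bullet> (A *v v))"

definition pos_semidef :: "real^'n^'n \<Rightarrow> bool" where
  "pos_semidef A \<longleftrightarrow> transpose A = A \<and> (\<forall>v. 0 \<le> v \<bullet> (A *v v))"

lemma pos_def_imp_pos_semidef: "pos_def A \<Longrightarrow> pos_semidef A"
  unfolding pos_def_def pos_semidef_def by (metis inner_zero_left order_le_less)

lemma pos_def_imp_invertible: "pos_def A \<Longrightarrow> invertible A"
  unfolding invertible_left_inverse matrix_left_invertible_ker pos_def_def
  by (metis inner_zero_right less_irrefl)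

lemma pos_def_matrix_inv:
  fixes A :: "real^'n^'n"
  assumes "pos_def A"
  shows "pos_def (matrix_inv A)"
  unfolding pos_def_def
proof (intro conjI allI impI)
  have inv: "invertible A" using pos_def_imp_invertible[OF assms] .
  then show "transpose (matrix_inv A) = matrix_inv A"
    using assms transpose_matrix_inv_symmetric unfolding pos_def_def by blast
  fix v :: "real^'n" assume v: "v \<noteq> 0"
  define u where "u = matrix_inv A *v v"
  have vu: "v = A *v u"
    unfolding u_def by (simp add: matrix_vector_mul_assoc matrix_inv_right[OF inv])
  have "u \<noteq> 0" using v vu by auto
  then have "0 < u \<bullet> (A *v u)" using assms unfolding pos_def_def by blast
  then show "0 < v \<bullet> (matrix_inv A *v v)"
    by (simp add: vu[symmetric] u_def[symmetric] inner_commute)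
qed

lemma pos_def_add_pos_semidef: "pos_def A \<Longrightarrow> pos_semidef B \<Longrightarrow> pos_def (A + B)"
  unfolding pos_def_def pos_semidef_def
  by (simp add: transpose_add matrix_vector_mult_add_rdistrib inner_add_right add_pos_nonneg)

lemma pos_def_mat: "0 < k \<Longrightarrow> pos_def (mat k)"
  by (simp add: pos_def_def mat_matrix_vector_mult)

lemma pos_semidef_mat: "0 \<le> k \<Longrightarrow> pos_semidef (mat k)"
  by (simp add: pos_semidef_def mat_matrix_vector_mult)

lemma pos_semidef_outer: "pos_semidef (outer x)"
  by (simp add: pos_semidef_def transpose_outer outer_matrix_vector_mult inner_commute)

lemma pos_semidef_scaleR: "0 \<le> k \<Longrightarrow> pos_semidef A \<Longrightarrow> pos_semidef (k *\<^sub>R A)"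
  unfolding pos_semidef_def
  by (simp add: transpose_scalar matrix_scaleR_vector_ac[symmetric] matrix_vector_mult_scaleR)

lemma pos_def_Dmat:
  assumes "0 < b" "b < c"
  shows "pos_def (Dmat b c x t)"
proof (induction t)
  case 0
  show ?case using assms by (simp add: pos_def_mat)
next
  case (Suc t)
  have "pos_def (matrix_inv (Dmat b c x t) + mat (1 / c))"
    using Suc assms by (simp add: pos_def_add_pos_semidef pos_def_matrix_inv pos_semidef_mat)
  then show ?case
    by (simp add: pos_def_add_pos_semidef pos_def_matrix_inv pos_semidef_outer)
qed

lemma quadratic_form_shift_matrix_inv:
  fixes D :: "real^'n^'n" and w :: "real^'n" and k :: real
  assumes "transpose D = D" "invertible D"
  defines "v \<equiv> w + k *\<^sub>R (D *v w)"
  shows "v \<bullet> (matrix_inv D *v v) - k * (v \<bullet> w) = w \<bullet> ((matrix_inv D + mat k) *v w)"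
proof -
  have inv_D: "matrix_inv D *v (D *v w) = w"
    by (simp add: matrix_vector_mul_assoc matrix_inv_left[OF assms(2)])
  have "(D *v w) \<bullet> (matrix_inv D *v w) = w \<bullet> w"
    using inner_symmetric_matrix[OF assms(1), of w "matrix_inv D *v w"]
    by (simp add: matrix_vector_mul_assoc matrix_inv_right[OF assms(2)])
  then show ?thesis
    unfolding v_def
    by (simp add: algebra_simps inner_add_left inner_add_right inner_commute inv_D
        mat_matrix_vector_mult)
qed

lemma quadratic_form_rank_one_update:
  fixes S :: "real^'n^'n"
  assumes "transpose S = S" "invertible S"
    and w: "w = matrix_inv S *v y + (x \<bullet> y) *\<^sub>R x"
  shows "w \<bullet> (S *v w) = y \<bullet> w + (x \<bullet> y)\<^sup>2 * (1 + x \<bullet> (S *v x))"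
proof -
  have Sw: "S *v w = y + (x \<bullet> y) *\<^sub>R (S *v x)"
    unfolding w by (simp add: algebra_simps matrix_vector_mul_assoc matrix_inv_right[OF assms(2)])
  have "(matrix_inv S *v y) \<bullet> (S *v x) = x \<bullet> y"
    using inner_symmetric_matrix[OF transpose_matrix_inv_symmetric[OF assms(2,1)], of x y]
      inner_symmetric_matrix[OF assms(1), of "matrix_inv S *v y" x]
    by (simp add: matrix_vector_mul_assoc matrix_inv_right[OF assms(2)] inner_commute)
  then show ?thesis
    unfolding Sw by (subst (1 2) w) (simp add: inner_add_left inner_add_right algebra_simps
        power2_eq_square inner_commute)
qed

lemma quadratic_form_update:
  fixes D :: "real^'n^'n" and x v :: "real^'n" and c :: real
  assumes "pos_def D" "0 < c"
  defines "S \<equiv> matrix_inv D + mat (1 / c)"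
    and "Q \<equiv> matrix_inv (mat 1 + (1 / c) *\<^sub>R D)"
    and "M \<equiv> matrix_inv (matrix_inv (matrix_inv D + mat (1 / c)) + outer x)"
  shows "v \<bullet> ((Q ** M ** outer x ** M ** Q - matrix_inv D + Q ** (M ** Q + mat (1 / c))) *v v)
    = - ((x \<bullet> (M *v (Q *v v)))\<^sup>2 * (x \<bullet> (S *v x)))"
proof -
  have pos_S: "pos_def S"
    unfolding S_def using assms(1,2)
    by (simp add: pos_def_add_pos_semidef pos_def_matrix_inv pos_semidef_mat)
  have M: "M = matrix_inv (matrix_inv S + outer x)"
    unfolding M_def S_def ..
  have "pos_def (matrix_inv S + outer x)"
    using pos_S by (simp add: pos_def_add_pos_semidef pos_def_matrix_inv pos_semidef_outer)
  then have inv_M: "invertible (matrix_inv S + outer x)" and sym_M: "transpose M = M"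
    unfolding M using pos_def_imp_invertible pos_def_matrix_inv pos_def_def by blast+
  have "pos_def (mat 1 + (1 / c) *\<^sub>R D)"
    using assms(1,2) by (simp add: pos_def_add_pos_semidef pos_def_mat pos_semidef_scaleR
        pos_def_imp_pos_semidef)
  then have inv_P: "invertible (mat 1 + (1 / c) *\<^sub>R D)" and sym_Q: "transpose Q = Q"
    unfolding Q_def using pos_def_imp_invertible pos_def_matrix_inv pos_def_def by blast+
  define w where "w = Q *v v"
  define y where "y = M *v w"
  have v: "v = w + (1 / c) *\<^sub>R (D *v w)"
    using arg_cong[OF matrix_inv_right[OF inv_P], of "\<lambda>A. A *v v"]
    by (simp add: w_def Q_def matrix_vector_mul_assoc[symmetric] algebra_simps
        matrix_scaleR_vector_ac[symmetric] matrix_vector_mult_scaleR)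
  have w: "w = matrix_inv S *v y + (x \<bullet> y) *\<^sub>R x"
    using arg_cong[OF matrix_inv_right[OF inv_M], of "\<lambda>A. A *v w"]
    by (simp add: y_def M matrix_vector_mul_assoc[symmetric] algebra_simps
        outer_matrix_vector_mult)
  have "v \<bullet> ((Q ** M ** outer x ** M ** Q - matrix_inv D + Q ** (M ** Q + mat (1 / c))) *v v)
      = w \<bullet> (M *v (outer x *v y)) - v \<bullet> (matrix_inv D *v v) + w \<bullet> (M *v w) + (1 / c) * (v \<bullet> w)"
    unfolding y_def w_def inner_symmetric_matrix[OF sym_Q]
    by (simp add: algebra_simps matrix_add_ldistrib matrix_vector_mul_assoc[symmetric]
        mat_matrix_vector_mult inner_symmetric_matrix[OF sym_Q, of v])
  also have "\<dots> = (x \<bullet> y)\<^sup>2 + y \<bullet> w - w \<bullet> (S *v w)"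
    using quadratic_form_shift_matrix_inv[OF _ pos_def_imp_invertible[OF assms(1)], of w "1 / c"]
      assms(1) inner_symmetric_matrix[OF sym_M, of w]
    unfolding y_def[symmetric] v[symmetric] S_def pos_def_def
    by (simp add: outer_matrix_vector_mult power2_eq_square inner_commute algebra_simps)
  also have "\<dots> = - ((x \<bullet> y)\<^sup>2 * (x \<bullet> (S *v x)))"
    using quadratic_form_rank_one_update[OF _ pos_def_imp_invertible[OF pos_S] w] pos_S
    unfolding pos_def_def by (simp add: algebra_simps)
  finally show ?thesis unfolding y_def w_def .
qed

theorem lemma3:
  fixes b c :: real and x :: "nat \<Rightarrow> real^'n" and t :: nat
  assumes "0 < b" and "b < c" and "1 \<le> t"
  shows "neg_semidef
    (Dprime b c x (t - 1) ** matrix_inv (Dmat b c x t) ** outer (x t)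
       ** matrix_inv (Dmat b c x t) ** Dprime b c x (t - 1)
     - matrix_inv (Dmat b c x (t - 1))
     + Dprime b c x (t - 1) **
         (matrix_inv (Dmat b c x t) ** Dprime b c x (t - 1) + mat (1 / c)))"
proof -
  obtain s where t: "t = Suc s" using assms(3) by (cases t) auto
  have pos_D: "pos_def (Dmat b c x s)" using pos_def_Dmat[OF assms(1,2)] .
  have "0 < c" using assms(1,2) by simp
  then have "pos_semidef (matrix_inv (Dmat b c x s) + mat (1 / c))"
    using pos_D by (simp add: pos_def_imp_pos_semidef pos_def_add_pos_semidef pos_def_matrix_inv
        pos_semidef_mat)
  then show ?thesis
    unfolding neg_semidef_def t Dprime_def diff_Suc_1 Dmat.simps(2)
    using quadratic_form_update[OF pos_D \<open>0 < c\<close>] unfolding pos_semidef_def by simp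
qed

end
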